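(* Let $G$ be a maximal $K_4$-minor free graph of order $n\geq 3$. Then $\gamma_{\times 2}(G)\leq \lfloor \frac{2n}{3}\rfloor$. *)

theory Defs
  imports Main
begin

definition simple_graph :: "'a set \<Rightarrow> ('a \<Rightarrow> 'a \<Rightarrow> bool) \<Rightarrow> bool" where
  "simple_graph V E \<longleftrightarrow> finite V \<and> (\<forall>x y. E x y \<longrightarrow> E y x)
     \<and> (\<forall>x. \<not> E x x) \<and> (\<forall>x y. E x y \<longrightarrow> x \<in> V \<and> y \<in> V)"

definition connected_set :: "('a \<Rightarrow> 'a \<Rightarrow> bool) \<Rightarrow> 'a set \<Rightarrow> bool" where
  "connected_set E B \<longleftrightarrow>
     (\<forall>x\<in>B. \<forall>y\<in>B. (\<lambda>u v. E u v \<and> u \<in> B \<and> v \<in> B)\<^sup>*\<^sup>* x y)"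

definition has_K4_minor :: "'a set \<Rightarrow> ('a \<Rightarrow> 'a \<Rightarrow> bool) \<Rightarrow> bool" where
  "has_K4_minor V E \<longleftrightarrow> (\<exists>B :: nat \<Rightarrow> 'a set.
     (\<forall>i<4. B i \<noteq> {} \<and> B i \<subseteq> V \<and> connected_set E (B i)) \<and>
     (\<forall>i<4. \<forall>j<4. i \<noteq> j \<longrightarrow> B i \<inter> B j = {} \<and> (\<exists>x\<in>B i. \<exists>y\<in>B j. E x y)))"

definition add_edge :: "('a \<Rightarrow> 'a \<Rightarrow> bool) \<Rightarrow> 'a \<Rightarrow> 'a \<Rightarrow> ('a \<Rightarrow> 'a \<Rightarrow> bool)" where
  "add_edge E x y = (\<lambda>u v. E u v \<or> (u = x \<and> v = y) \<or> (u = y \<and> v = x))"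

definition maximal_K4_minor_free :: "'a set \<Rightarrow> ('a \<Rightarrow> 'a \<Rightarrow> bool) \<Rightarrow> bool" where
  "maximal_K4_minor_free V E \<longleftrightarrow> \<not> has_K4_minor V E \<and>
     (\<forall>x\<in>V. \<forall>y\<in>V. x \<noteq> y \<and> \<not> E x y \<longrightarrow> has_K4_minor V (add_edge E x y))"

definition closed_nbhd :: "('a \<Rightarrow> 'a \<Rightarrow> bool) \<Rightarrow> 'a \<Rightarrow> 'a set" where
  "closed_nbhd E v = insert v {u. E v u}"

definition double_dominating :: "'a set \<Rightarrow> ('a \<Rightarrow> 'a \<Rightarrow> bool) \<Rightarrow> 'a set \<Rightarrow> bool" where
  "double_dominating V E S \<longleftrightarrow> S \<subseteq> V \<and> (\<forall>v\<in>V. card (S \<inter> closed_nbhd E v) \<ge> 2)"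

definition double_domination_number :: "'a set \<Rightarrow> ('a \<Rightarrow> 'a \<Rightarrow> bool) \<Rightarrow> nat" where
  "double_domination_number V E = Min {card S | S. double_dominating V E S}"

end

theory Submission
  imports Defs
begin

text \<open>A maximal K4-minor-free graph on at least three vertices is a 2-tree. By Dirac's theorem
  (a nonempty graph of minimum degree at least 3 has a K4 minor) it has a vertex v of degree at
  most 2; maximality forces v to have exactly two neighbours, which are adjacent, and deleting v
  leaves a smaller maximal K4-minor-free graph. Inductively, the graph has a proper 3-colouring
  in which every vertex lies on a triangle. A triangle meets each colour class at most once, so
  the complement of a largest colour class contains two vertices of every closed neighbourhood:
  it is a double dominating set with at most 2n/3 vertices.

  Dirac's theorem holds because a K4-minor-free graph of minimum degree at least 3 always yields
  a smaller one, by contracting an edge or by contracting an edge and deleting a vertex.\<close>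

definition nbhd :: "('a \<Rightarrow> 'a \<Rightarrow> bool) \<Rightarrow> 'a \<Rightarrow> 'a set" where
  "nbhd E v = {u. E v u}"

definition del_vertex :: "('a \<Rightarrow> 'a \<Rightarrow> bool) \<Rightarrow> 'a \<Rightarrow> ('a \<Rightarrow> 'a \<Rightarrow> bool)" where
  "del_vertex E v = (\<lambda>p q. E p q \<and> p \<noteq> v \<and> q \<noteq> v)"

definition contract :: "('a \<Rightarrow> 'a \<Rightarrow> bool) \<Rightarrow> 'a \<Rightarrow> 'a \<Rightarrow> ('a \<Rightarrow> 'a \<Rightarrow> bool)" where
  "contract E x y = (\<lambda>u w. (E u w \<and> u \<noteq> y \<and> w \<noteq> y) \<or> (u = x \<and> E y w \<and> w \<noteq> x)
      \<or> (w = x \<and> E y u \<and> u \<noteq> x))"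

definition simplicial :: "('a \<Rightarrow> 'a \<Rightarrow> bool) \<Rightarrow> 'a \<Rightarrow> bool" where
  "simplicial E v \<longleftrightarrow> (\<forall>p q. E v p \<longrightarrow> E v q \<longrightarrow> p \<noteq> q \<longrightarrow> E p q)"

lemma in_nbhd_iff [simp]: "u \<in> nbhd E v \<longleftrightarrow> E v u"
  by (simp add: nbhd_def)

lemma simple_graph_sym: "simple_graph V E \<Longrightarrow> E x y \<Longrightarrow> E y x"
  unfolding simple_graph_def by blast

lemma simple_graph_irrefl: "simple_graph V E \<Longrightarrow> \<not> E x x"
  unfolding simple_graph_def by blast

lemma simple_graph_edgeD:
  assumes "simple_graph V E" "E x y"
  shows "x \<in> V" "y \<in> V"
  using assms unfolding simple_graph_def by blast+

lemma simple_graph_finite: "simple_graph V E \<Longrightarrow> finite V"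
  unfolding simple_graph_def by blast

lemma finite_nbhd: "simple_graph V E \<Longrightarrow> finite (nbhd E v)"
  by (metis finite_subset in_nbhd_iff simple_graph_edgeD(2) simple_graph_finite subsetI)

lemma simple_graph_del_vertex: "simple_graph V E \<Longrightarrow> simple_graph (V - {v}) (del_vertex E v)"
  unfolding simple_graph_def del_vertex_def by blast

lemma simple_graph_contract:
  "simple_graph V E \<Longrightarrow> E x y \<Longrightarrow> simple_graph (V - {y}) (contract E x y)"
  unfolding simple_graph_def contract_def by blast

lemma simple_graph_add_edge:
  "simple_graph V E \<Longrightarrow> x \<in> V \<Longrightarrow> y \<in> V \<Longrightarrow> x \<noteq> y \<Longrightarrow> simple_graph V (add_edge E x y)"
  unfolding simple_graph_def add_edge_def by blast

lemma nbhd_del_vertex: "z \<noteq> v \<Longrightarrow> nbhd (del_vertex E v) z = nbhd E z - {v}"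
  by (auto simp: del_vertex_def)

lemma nbhd_contract_self:
  "simple_graph V E \<Longrightarrow> E x y \<Longrightarrow> nbhd (contract E x y) x = (nbhd E x \<union> nbhd E y) - {x, y}"
  unfolding simple_graph_def contract_def nbhd_def by blast

lemma nbhd_contract_other:
  assumes "simple_graph V E" "z \<noteq> x" "z \<noteq> y"
  shows "nbhd (contract E x y) z = (nbhd E z - {y}) \<union> (if E z y then {x} else {})"
  using assms simple_graph_sym[OF assms(1)] by (auto simp: contract_def)

lemma card_nbhd_contract_other:
  assumes sg: "simple_graph V E" and xy: "x \<noteq> y" and z: "z \<noteq> x" "z \<noteq> y"
  shows "card (nbhd E z) \<le> card (nbhd (contract E x y) z) + (if E z x \<and> E z y then 1 else 0)"
proof (cases "E z y")
  case False
  then show ?thesis using nbhd_contract_other[OF sg z] by simp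
next
  case zy: True
  have fin: "finite (nbhd E z)" by (rule finite_nbhd[OF sg])
  have N: "nbhd (contract E x y) z = insert x (nbhd E z - {y})"
    using nbhd_contract_other[OF sg z] zy by simp
  have "card (nbhd E z) = card (nbhd E z - {y}) + 1"
    using card.remove[OF fin, of y] zy by simp
  moreover have "card (nbhd (contract E x y) z) = card (nbhd E z - {y}) + (if E z x then 0 else 1)"
    unfolding N using fin xy by (simp add: card_insert_if)
  ultimately show ?thesis using zy by simp
qed

lemma rtranclp_lift:
  assumes "R\<^sup>*\<^sup>* a b" "\<And>u w. R u w \<Longrightarrow> S\<^sup>*\<^sup>* u w"
  shows "S\<^sup>*\<^sup>* a b"
  using assms(1) by induction (auto intro: rtranclp_trans assms(2))

lemma connected_set_mono:
  assumes "connected_set E S" "\<And>u w. u \<in> S \<Longrightarrow> w \<in> S \<Longrightarrow> E u w \<Longrightarrow> E' u w"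
  shows "connected_set E' S"
  unfolding connected_set_def
proof (intro ballI)
  fix p q assume "p \<in> S" "q \<in> S"
  then have "(\<lambda>u w. E u w \<and> u \<in> S \<and> w \<in> S)\<^sup>*\<^sup>* p q"
    using assms(1) unfolding connected_set_def by blast
  then show "(\<lambda>u w. E' u w \<and> u \<in> S \<and> w \<in> S)\<^sup>*\<^sup>* p q"
    by (rule rtranclp_lift) (simp add: assms(2) r_into_rtranclp)
qed

lemma connected_set_singleton: "connected_set E {x}"
  unfolding connected_set_def by auto

lemma connected_set_has_neighbour:
  assumes conn: "connected_set E B" and sg: "simple_graph V E"
    and B: "v \<in> B" "z \<in> B" "z \<noteq> v"
  shows "\<exists>w\<in>B. w \<noteq> v \<and> E w v"
proof -
  let ?R = "\<lambda>u w. E u w \<and> u \<in> B \<and> w \<in> B"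
  have "?R\<^sup>*\<^sup>* z v" using conn B unfolding connected_set_def by blast
  then obtain w where w: "E w v" "w \<in> B"
    using B(3) by (cases rule: rtranclp.cases) auto
  moreover have "w \<noteq> v" using w(1) simple_graph_irrefl[OF sg] by blast
  ultimately show ?thesis by blast
qed

text \<open>A walk through a simplicial vertex v can be shortcut, since the neighbours of v
  before and after it are adjacent.\<close>
lemma connected_set_Diff_simplicial:
  assumes conn: "connected_set E B" and sg: "simple_graph V E" and simp: "simplicial E v"
  shows "connected_set E (B - {v})"
  unfolding connected_set_def
proof (intro ballI)
  fix p s assume p: "p \<in> B - {v}" and s: "s \<in> B - {v}"
  let ?RB = "\<lambda>u w. E u w \<and> u \<in> B \<and> w \<in> B"
  let ?R = "\<lambda>u w. E u w \<and> u \<in> B - {v} \<and> w \<in> B - {v}"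
  have "\<exists>q\<in>B - {v}. ?R\<^sup>*\<^sup>* p q \<and> (q = t \<or> t = v \<and> E q v)" if "?RB\<^sup>*\<^sup>* p t" for t
    using that
  proof (induction rule: rtranclp_induct)
    case base
    then show ?case using p by blast
  next
    case (step t r)
    then obtain q where q: "q \<in> B - {v}" "?R\<^sup>*\<^sup>* p q" "q = t \<or> t = v \<and> E q v" by blast
    have tr: "E t r" "r \<in> B" using step.hyps(2) by auto
    show ?case
    proof (cases "r = v")
      case True
      then have "q = t" using q(3) tr(1) simple_graph_irrefl[OF sg] by blast
      then show ?thesis using q True tr by blast
    next
      case rv: False
      have "?R\<^sup>*\<^sup>* p r"
      proof (cases "q = t")
        case True
        then show ?thesis using q tr rv by (auto intro: rtranclp.rtrancl_into_rtrancl)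
      next
        case False
        then have tv: "t = v" "E q v" using q(3) by auto
        show ?thesis
        proof (cases "q = r")
          case False
          then have "E q r"
            using simp tv tr simple_graph_sym[OF sg] unfolding simplicial_def by blast
          then show ?thesis using q tr rv by (auto intro: rtranclp.rtrancl_into_rtrancl)
        qed (use q in simp)
      qed
      then show ?thesis using tr rv by blast
    qed
  qed
  moreover have "?RB\<^sup>*\<^sup>* p s" using conn p s unfolding connected_set_def by blast
  ultimately show "?R\<^sup>*\<^sup>* p s" using s by blast
qed

definition K4_model :: "'a set \<Rightarrow> ('a \<Rightarrow> 'a \<Rightarrow> bool) \<Rightarrow> (nat \<Rightarrow> 'a set) \<Rightarrow> bool" where
  "K4_model V E B \<longleftrightarrow> (\<forall>i<4. B i \<noteq> {} \<and> B i \<subseteq> V \<and> connected_set E (B i)) \<and>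
     (\<forall>i<4. \<forall>j<4. i \<noteq> j \<longrightarrow> B i \<inter> B j = {} \<and> (\<exists>x\<in>B i. \<exists>y\<in>B j. E x y))"

lemma has_K4_minor_iff_K4_model: "has_K4_minor V E \<longleftrightarrow> (\<exists>B. K4_model V E B)"
  unfolding has_K4_minor_def K4_model_def by blast

lemma has_K4_minor_mono:
  assumes "has_K4_minor V E" "V \<subseteq> V'" "\<And>u w. E u w \<Longrightarrow> E' u w"
  shows "has_K4_minor V' E'"
proof -
  obtain B where "K4_model V E B" using assms(1) has_K4_minor_iff_K4_model by blast
  moreover have "connected_set E' S" if "connected_set E S" for S
    using that by (rule connected_set_mono) (rule assms(3))
  ultimately have "K4_model V' E' B"
    unfolding K4_model_def using assms(2,3) by (meson subset_trans)
  then show ?thesis using has_K4_minor_iff_K4_model by blast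
qed

lemma has_K4_minor_card_ge_4:
  assumes "has_K4_minor V E" "finite V"
  shows "4 \<le> card V"
proof -
  obtain B where B: "K4_model V E B" using assms(1) has_K4_minor_iff_K4_model by blast
  define f where "f i = (SOME y. y \<in> B i)" for i
  have f: "f i \<in> B i" if "i < 4" for i
    using B that unfolding K4_model_def f_def by (simp add: some_in_eq)
  have inj: "inj_on f {..<4}"
  proof (rule inj_onI)
    fix i j assume "i \<in> {..<4::nat}" "j \<in> {..<4::nat}" "f i = f j"
    then show "i = j" using f B unfolding K4_model_def by (metis disjoint_iff lessThan_iff)
  qed
  have "f ` {..<4} \<subseteq> V" using f B unfolding K4_model_def by blast
  then have "card (f ` {..<4}) \<le> card V" by (rule card_mono[OF assms(2)])
  then show ?thesis using card_image[OF inj] by simp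
qed

lemma has_K4_minor_K4_subgraph:
  assumes sg: "simple_graph V E"
    and e: "E x a" "E x b" "E x c" "E a b" "E a c" "E b c"
  shows "has_K4_minor V E"
proof -
  define B :: "nat \<Rightarrow> 'a set" where "B i = [{x}, {a}, {b}, {c}] ! i" for i
  have i4: "i < 4 \<Longrightarrow> i = 0 \<or> i = 1 \<or> i = 2 \<or> i = 3" for i :: nat by arith
  have V: "x \<in> V" "a \<in> V" "b \<in> V" "c \<in> V" using e simple_graph_edgeD[OF sg] by blast+
  have e': "E a x" "E b x" "E c x" "E b a" "E c a" "E c b" using e simple_graph_sym[OF sg] by blast+
  have "B i \<noteq> {} \<and> B i \<subseteq> V \<and> connected_set E (B i)" if "i < 4" for i
    using i4[OF that] V by (elim disjE) (auto simp: B_def connected_set_singleton)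
  moreover have "B i \<inter> B j = {} \<and> (\<exists>p\<in>B i. \<exists>q\<in>B j. E p q)" if "i < 4" "j < 4" "i \<noteq> j" for i j
  proof -
    have "x \<noteq> a" "x \<noteq> b" "x \<noteq> c" "a \<noteq> b" "a \<noteq> c" "b \<noteq> c"
      using e simple_graph_irrefl[OF sg] by metis+
    then show ?thesis
      using i4[OF that(1)] i4[OF that(2)] that(3) e e' by (elim disjE) (simp_all add: B_def)
  qed
  ultimately have "K4_model V E B" unfolding K4_model_def by blast
  then show ?thesis unfolding has_K4_minor_iff_K4_model by blast
qed

lemma connected_set_uncontract:
  assumes sg: "simple_graph V E" and xy: "E x y"
    and conn: "connected_set (contract E x y) B"
  shows "connected_set E (if x \<in> B then insert y B else B)"
proof -
  define B' where "B' = (if x \<in> B then insert y B else B)"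
  let ?R = "\<lambda>u w. E u w \<and> u \<in> B' \<and> w \<in> B'"
  have BB': "B \<subseteq> B'" by (auto simp: B'_def)
  have xy_path: "?R\<^sup>*\<^sup>* x y" "?R\<^sup>*\<^sup>* y x" if "x \<in> B"
    using that xy simple_graph_sym[OF sg xy] by (auto simp: B'_def intro: r_into_rtranclp)
  have step: "?R\<^sup>*\<^sup>* u w" if uw: "contract E x y u w" "u \<in> B" "w \<in> B" for u w
  proof -
    from uw(1) consider "E u w" | "u = x" "E y w" | "w = x" "E y u"
      unfolding contract_def by blast
    then show ?thesis
    proof cases
      case 1
      then show ?thesis using uw BB' by (blast intro: r_into_rtranclp)
    next
      case 2
      then have "?R y w" using uw by (auto simp: B'_def)
      then show ?thesis using xy_path(1) uw(2) 2(1) by (blast intro: rtranclp.rtrancl_into_rtrancl)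
    next
      case 3
      then have "?R u y" using uw simple_graph_sym[OF sg] by (auto simp: B'_def)
      then show ?thesis using xy_path(2) uw(3) 3(1) by (blast intro: converse_rtranclp_into_rtranclp)
    qed
  qed
  have in_B: "?R\<^sup>*\<^sup>* p q" if "p \<in> B" "q \<in> B" for p q
  proof -
    have "(\<lambda>u w. contract E x y u w \<and> u \<in> B \<and> w \<in> B)\<^sup>*\<^sup>* p q"
      using conn that unfolding connected_set_def by blast
    then show ?thesis by (rule rtranclp_lift) (use step in blast)
  qed
  show ?thesis
  proof (cases "x \<in> B")
    case False
    then show ?thesis using in_B unfolding connected_set_def B'_def by simp
  next
    case True
    have "?R\<^sup>*\<^sup>* p x \<and> ?R\<^sup>*\<^sup>* x p" if "p \<in> B'" for p
      using that True in_B xy_path by (cases "p = y") (auto simp: B'_def)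
    then show ?thesis unfolding connected_set_def B'_def[symmetric] by (blast intro: rtranclp_trans)
  qed
qed

lemma has_K4_minor_of_contract:
  assumes sg: "simple_graph V E" and xy: "E x y"
    and K: "has_K4_minor (V - {y}) (contract E x y)"
  shows "has_K4_minor V E"
proof -
  obtain B where B: "K4_model (V - {y}) (contract E x y) B"
    using K has_K4_minor_iff_K4_model by blast
  define B' where "B' i = (if x \<in> B i then insert y (B i) else B i)" for i
  have "B' i \<noteq> {} \<and> B' i \<subseteq> V \<and> connected_set E (B' i)" if "i < 4" for i
    using B that simple_graph_edgeD[OF sg xy] connected_set_uncontract[OF sg xy]
    unfolding K4_model_def B'_def by auto
  moreover have "B' i \<inter> B' j = {} \<and> (\<exists>p\<in>B' i. \<exists>q\<in>B' j. E p q)"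
    if ij: "i < 4" "j < 4" "i \<noteq> j" for i j
  proof
    have "B i \<inter> B j = {}" "y \<notin> B i" "y \<notin> B j" using B ij unfolding K4_model_def by auto
    then show "B' i \<inter> B' j = {}" by (auto simp: B'_def)
    obtain p q where pq: "p \<in> B i" "q \<in> B j" "contract E x y p q"
      using B ij unfolding K4_model_def by blast
    from pq(3) consider "E p q" | "p = x" "E y q" | "q = x" "E y p"
      unfolding contract_def by blast
    then show "\<exists>p\<in>B' i. \<exists>q\<in>B' j. E p q"
      using pq simple_graph_sym[OF sg] by cases (auto simp: B'_def)
  qed
  ultimately have "K4_model V E B'" unfolding K4_model_def by blast
  then show ?thesis unfolding has_K4_minor_iff_K4_model by blast
qed

lemma K4_model_singleton_card_nbhd:
  assumes sg: "simple_graph V E" and B: "K4_model V E B" and i: "i < 4" "B i = {v}"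
  shows "3 \<le> card (nbhd E v)"
proof -
  have "\<exists>y. y \<in> B j \<and> E v y" if j: "j \<in> {..<4} - {i}" for j
  proof -
    obtain p q where "p \<in> B i" "q \<in> B j" "E p q"
      using B i j unfolding K4_model_def by (metis Diff_iff lessThan_iff singletonI)
    then show ?thesis using i(2) by auto
  qed
  then obtain f where f: "\<And>j. j \<in> {..<4} - {i} \<Longrightarrow> f j \<in> B j \<and> E v (f j)"
    by (metis (mono_tags) someI_ex)
  have "inj_on f ({..<4} - {i})"
  proof (rule inj_onI)
    fix j k assume jk: "j \<in> {..<4} - {i}" "k \<in> {..<4} - {i}" "f j = f k"
    show "j = k"
    proof (rule ccontr)
      assume "j \<noteq> k"
      then have "B j \<inter> B k = {}" using B jk unfolding K4_model_def by auto
      then show False using f[OF jk(1)] f[OF jk(2)] jk(3) by auto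
    qed
  qed
  then have card3: "card (f ` ({..<4} - {i})) = 3" using i by (simp add: card_image)
  have "f ` ({..<4} - {i}) \<subseteq> nbhd E v" using f by (simp add: image_subset_iff)
  then have "card (f ` ({..<4} - {i})) \<le> card (nbhd E v)" by (rule card_mono[OF finite_nbhd[OF sg]])
  then show ?thesis using card3 by simp
qed

lemma simplicial_reroute_edge:
  assumes sg: "simple_graph V E" and simp: "simplicial E v" and conn: "connected_set E B"
    and ne: "B - {v} \<noteq> {}" and pq: "p \<in> B" "q \<notin> B" "E p q"
  shows "\<exists>p'\<in>B - {v}. E p' q"
proof (cases "p = v")
  case False
  then show ?thesis using pq by blast
next
  case True
  obtain z where "z \<in> B" "z \<noteq> v" using ne by blast
  then obtain w where w: "w \<in> B" "w \<noteq> v" "E w v"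
    using connected_set_has_neighbour[OF conn sg] pq(1) True by blast
  have "w \<noteq> q" using w(1) pq(2) by blast
  then have "E w q"
    using simp w(3) pq(3) True simple_graph_sym[OF sg] unfolding simplicial_def by blast
  then show ?thesis using w by blast
qed

lemma has_K4_minor_del_simplicial:
  assumes sg: "simple_graph V E" and K: "has_K4_minor V E"
    and deg: "card (nbhd E v) \<le> 2" and simp: "simplicial E v"
  shows "has_K4_minor (V - {v}) (del_vertex E v)"
proof -
  obtain B where B: "K4_model V E B" using K has_K4_minor_iff_K4_model by blast
  define B' where "B' i = B i - {v}" for i
  have ne: "B i - {v} \<noteq> {}" if "i < 4" for i
    using K4_model_singleton_card_nbhd[OF sg B that] deg B that
    unfolding K4_model_def by (metis Diff_eq_empty_iff not_less_eq_eq numeral_2_eq_2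
        numeral_3_eq_3 subset_singletonD)
  have conn: "connected_set E (B i)" if "i < 4" for i
    using B that unfolding K4_model_def by blast
  have "B' i \<noteq> {} \<and> B' i \<subseteq> V - {v} \<and> connected_set (del_vertex E v) (B' i)" if "i < 4" for i
  proof -
    have "connected_set E (B' i)"
      unfolding B'_def by (rule connected_set_Diff_simplicial[OF conn[OF that] sg simp])
    then have "connected_set (del_vertex E v) (B' i)"
      by (rule connected_set_mono) (auto simp: del_vertex_def B'_def)
    then show ?thesis using ne[OF that] B that unfolding K4_model_def B'_def by blast
  qed
  moreover have "B' i \<inter> B' j = {} \<and> (\<exists>p\<in>B' i. \<exists>q\<in>B' j. del_vertex E v p q)"
    if ij: "i < 4" "j < 4" "i \<noteq> j" for i j
  proof -
    have d: "B i \<inter> B j = {}" using B ij unfolding K4_model_def by blast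
    obtain p q where pq: "p \<in> B i" "q \<in> B j" "E p q" using B ij unfolding K4_model_def by blast
    have "\<exists>p\<in>B' i. \<exists>q\<in>B' j. del_vertex E v p q"
    proof (cases "q = v")
      case False
      obtain p' where "p' \<in> B i - {v}" "E p' q"
        using simplicial_reroute_edge[OF sg simp conn[OF ij(1)] ne[OF ij(1)] pq(1)]
          pq(2,3) d by blast
      then show ?thesis using False pq(2) by (auto simp: B'_def del_vertex_def)
    next
      case True
      then have "p \<noteq> v" using pq d by blast
      obtain q' where "q' \<in> B j - {v}" "E q' p"
        using simplicial_reroute_edge[OF sg simp conn[OF ij(2)] ne[OF ij(2)] pq(2)]
          pq(1) simple_graph_sym[OF sg pq(3)] d by blast
      then show ?thesis
        using \<open>p \<noteq> v\<close> pq(1) simple_graph_sym[OF sg] by (auto simp: B'_def del_vertex_def)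
    qed
    then show ?thesis using d by (auto simp: B'_def)
  qed
  ultimately have "K4_model (V - {v}) (del_vertex E v) B'" unfolding K4_model_def by blast
  then show ?thesis unfolding has_K4_minor_iff_K4_model by blast
qed

lemma has_K4_minor_del_low_vertex:
  assumes sg: "simple_graph V E" and K: "has_K4_minor V E"
    and nv: "\<And>u. E v u \<Longrightarrow> u = p \<or> u = q" and pq: "p \<noteq> q \<Longrightarrow> E p q"
  shows "has_K4_minor (V - {v}) (del_vertex E v)"
proof (rule has_K4_minor_del_simplicial[OF sg K])
  have "nbhd E v \<subseteq> {p, q}" using nv unfolding nbhd_def by blast
  then have "card (nbhd E v) \<le> card {p, q}" by (rule card_mono[rotated]) simp
  also have "\<dots> \<le> 2" by (cases "p = q") simp_all
  finally show "card (nbhd E v) \<le> 2" .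
  show "simplicial E v"
    unfolding simplicial_def
  proof (intro allI impI)
    fix s t assume "E v s" "E v t" "s \<noteq> t"
    then have "s = p \<or> s = q" "t = p \<or> t = q" using nv by blast+
    then show "E s t" using pq simple_graph_sym[OF sg, of p q] \<open>s \<noteq> t\<close> by auto
  qed
qed

definition dirac_counterexample :: "'a set \<Rightarrow> ('a \<Rightarrow> 'a \<Rightarrow> bool) \<Rightarrow> bool" where
  "dirac_counterexample V E \<longleftrightarrow> simple_graph V E \<and> V \<noteq> {} \<and>
     (\<forall>v\<in>V. 3 \<le> card (nbhd E v)) \<and> \<not> has_K4_minor V E"

lemma dirac_counterexampleD:
  assumes "dirac_counterexample V E"
  shows "simple_graph V E" "v \<in> V \<Longrightarrow> 3 \<le> card (nbhd E v)" "\<not> has_K4_minor V E"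
  using assms unfolding dirac_counterexample_def by blast+

lemma dirac_counterexample_contract:
  assumes ce: "dirac_counterexample V E" and xy: "E x y"
    and common: "\<And>z. E x z \<Longrightarrow> E y z \<Longrightarrow> 4 \<le> card (nbhd E z)"
    and big: "3 \<le> card ((nbhd E x \<union> nbhd E y) - {x, y})"
  shows "dirac_counterexample (V - {y}) (contract E x y)"
proof -
  note sg = dirac_counterexampleD(1)[OF ce]
  have "x \<noteq> y" using xy simple_graph_irrefl[OF sg] by blast
  have "3 \<le> card (nbhd (contract E x y) z)" if z: "z \<in> V - {y}" for z
  proof (cases "z = x")
    case True
    then show ?thesis using nbhd_contract_self[OF sg xy] big by simp
  next
    case False
    have "card (nbhd E z) \<le> card (nbhd (contract E x y) z) + (if E z x \<and> E z y then 1 else 0)"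
      using card_nbhd_contract_other[OF sg \<open>x \<noteq> y\<close> False] z by blast
    moreover have "3 \<le> card (nbhd E z)" using dirac_counterexampleD(2)[OF ce] z by blast
    moreover have "E z x \<Longrightarrow> E z y \<Longrightarrow> 4 \<le> card (nbhd E z)"
      using common simple_graph_sym[OF sg] by blast
    ultimately show ?thesis by (auto split: if_splits)
  qed
  moreover have "x \<in> V - {y}" using simple_graph_edgeD[OF sg xy] \<open>x \<noteq> y\<close> by blast
  moreover have "\<not> has_K4_minor (V - {y}) (contract E x y)"
    using has_K4_minor_of_contract[OF sg xy] dirac_counterexampleD(3)[OF ce] by blast
  ultimately show ?thesis
    unfolding dirac_counterexample_def using simple_graph_contract[OF sg xy] by blast
qed

lemma dirac_counterexample_contract_disjoint:
  assumes ce: "dirac_counterexample V E" and xy: "E x y"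
    and disj: "nbhd E x \<inter> nbhd E y = {}"
  shows "dirac_counterexample (V - {y}) (contract E x y)"
proof (rule dirac_counterexample_contract[OF ce xy])
  show "\<And>z. E x z \<Longrightarrow> E y z \<Longrightarrow> 4 \<le> card (nbhd E z)" using disj by auto
  note sg = dirac_counterexampleD(1)[OF ce]
  have yx: "E y x" using simple_graph_sym[OF sg xy] .
  have fin: "finite (nbhd E x)" "finite (nbhd E y)" using finite_nbhd[OF sg] by blast+
  have "card (nbhd E x - {y}) = card (nbhd E x) - 1" "card (nbhd E y - {x}) = card (nbhd E y) - 1"
    using xy yx fin by simp_all
  moreover have "3 \<le> card (nbhd E x)" "3 \<le> card (nbhd E y)"
    using dirac_counterexampleD(2)[OF ce] simple_graph_edgeD[OF sg xy] by blast+
  moreover have "card ((nbhd E x - {y}) \<union> (nbhd E y - {x}))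
      = card (nbhd E x - {y}) + card (nbhd E y - {x})"
    using disj fin by (intro card_Un_disjoint) auto
  moreover have "(nbhd E x \<union> nbhd E y) - {x, y} = (nbhd E x - {y}) \<union> (nbhd E y - {x})"
    using simple_graph_irrefl[OF sg] by auto
  ultimately show "3 \<le> card ((nbhd E x \<union> nbhd E y) - {x, y})" by simp
qed

text \<open>Contracting bx turns a into a vertex of degree two adjacent to b and c, which can then
  be deleted; b and c each lose x and a but become adjacent.\<close>
lemma card_nbhd_contract_delete:
  assumes sg: "simple_graph V E"
    and nx: "nbhd E x = {a, b, c}" and na: "nbhd E a = {x, b, c}" and bc: "\<not> E b c" "b \<noteq> c"
    and z: "z \<noteq> x" "z \<noteq> a"
  shows "card (nbhd (del_vertex (contract E b x) a) z)
    = (if z = b \<or> z = c then card (nbhd E z) - 1 else card (nbhd E z))"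
proof -
  define C where "C = contract E b x"
  have E: "E x a" "E x b" "E x c" "E a b" "E a c" using nx na by auto
  have E': "E b x" "E c x" "E c a" "E b a" "\<not> E c b" using E bc simple_graph_sym[OF sg] by blast+
  have dist: "x \<noteq> a" "x \<noteq> b" "x \<noteq> c" "a \<noteq> b" "a \<noteq> c"
    using E simple_graph_irrefl[OF sg] by metis+
  have ND: "nbhd (del_vertex C a) z = nbhd C z - {a}" using z by (simp add: nbhd_del_vertex)
  show ?thesis
  proof (cases "z = b \<or> z = c")
    case True
    define w where "w = (if z = b then c else b)"
    have "nbhd C b = insert c (nbhd E b - {x})"
      using nbhd_contract_self[OF sg E'(1)] nx E'(4) dist bc(2) simple_graph_irrefl[OF sg]
      unfolding C_def by auto
    moreover have "nbhd C c = insert b (nbhd E c - {x})"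
      using nbhd_contract_other[OF sg, of c b x] dist bc(2) E'(2) unfolding C_def by auto
    ultimately have "nbhd (del_vertex C a) z = insert w (nbhd E z - {x, a})"
      using True ND dist bc(2) unfolding w_def by auto
    moreover have "w \<notin> nbhd E z - {x, a}" "{x, a} \<subseteq> nbhd E z"
      using True E' bc unfolding w_def by auto
    moreover have "card {x, a} = 2" using dist by simp
    ultimately show ?thesis
      using True finite_nbhd[OF sg, of z] card_mono[OF finite_nbhd[OF sg], of "{x, a}" z]
      unfolding C_def by (simp add: card_Diff_subset)
  next
    case False
    have "\<not> E z x" "\<not> E z a" using nx na False z simple_graph_sym[OF sg] by auto
    then have "nbhd (del_vertex C a) z = nbhd E z"
      using ND nbhd_contract_other[OF sg, of z b x] False z unfolding C_def by auto
    then show ?thesis using False unfolding C_def by simp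
  qed
qed

lemma dirac_counterexample_contract_delete:
  assumes ce: "dirac_counterexample V E"
    and nx: "nbhd E x = {a, b, c}" and na: "nbhd E a = {x, b, c}" and bc: "\<not> E b c" "b \<noteq> c"
    and db: "4 \<le> card (nbhd E b)" and dc: "4 \<le> card (nbhd E c)"
  shows "dirac_counterexample (V - {x} - {a}) (del_vertex (contract E b x) a)"
proof -
  note sg = dirac_counterexampleD(1)[OF ce]
  have "E x b" "E a b" using nx na by auto
  then have E: "E x b" "E b x" and "b \<noteq> x" "b \<noteq> a"
    using simple_graph_sym[OF sg] simple_graph_irrefl[OF sg] by metis+
  have "3 \<le> card (nbhd (del_vertex (contract E b x) a) z)" if z: "z \<in> V - {x} - {a}" for z
    using card_nbhd_contract_delete[OF sg nx na bc, of z] z db dc dirac_counterexampleD(2)[OF ce, of z]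
    by auto
  moreover have "b \<in> V - {x} - {a}" using simple_graph_edgeD[OF sg E(1)] \<open>b \<noteq> x\<close> \<open>b \<noteq> a\<close> by blast
  moreover have "\<not> has_K4_minor (V - {x} - {a}) (del_vertex (contract E b x) a)"
  proof
    assume "has_K4_minor (V - {x} - {a}) (del_vertex (contract E b x) a)"
    then have "has_K4_minor (V - {x}) (contract E b x)"
      by (rule has_K4_minor_mono) (auto simp: del_vertex_def)
    then show False using has_K4_minor_of_contract[OF sg E(2)] dirac_counterexampleD(3)[OF ce] by blast
  qed
  moreover have "simple_graph (V - {x} - {a}) (del_vertex (contract E b x) a)"
    by (rule simple_graph_del_vertex[OF simple_graph_contract[OF sg E(2)]])
  ultimately show ?thesis unfolding dirac_counterexample_def by blast
qed

lemma dirac_counterexample_descent_degree_3_end: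
  assumes ce: "dirac_counterexample V E"
    and nx: "nbhd E x = {a, b, c}" and na: "nbhd E a = {x, b, c}" and bc: "\<not> E b c"
    and db: "card (nbhd E b) = 3"
  shows "\<exists>V' E'. V' \<subset> V \<and> dirac_counterexample V' E'"
proof -
  note sg = dirac_counterexampleD(1)[OF ce]
  have "E x a" "E x b" "E a b" using nx na by auto
  then have "x \<in> nbhd E b" "a \<in> nbhd E b" "x \<noteq> a"
    using simple_graph_sym[OF sg] simple_graph_irrefl[OF sg] by auto
  then have "card (nbhd E b - {x, a}) = card (nbhd E b) - card {x, a}"
    by (intro card_Diff_subset) auto
  then have "card (nbhd E b - {x, a}) = 1" using db \<open>x \<noteq> a\<close> by simp
  then obtain d where d: "nbhd E b - {x, a} = {d}" by (rule card_1_singletonE)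
  then have "d \<in> nbhd E b - {x, a}" by simp
  then have bd: "E b d" and dxa: "d \<noteq> x" "d \<noteq> a" by simp_all
  have nbb: "nbhd E b = {x, a, d}"
    using d \<open>x \<in> nbhd E b\<close> \<open>a \<in> nbhd E b\<close> unfolding set_eq_iff by blast
  have "d \<noteq> b" "d \<noteq> c" using bd bc simple_graph_irrefl[OF sg] by blast+
  then have "d \<notin> nbhd E x" "d \<notin> nbhd E a" using nx na dxa by simp_all
  then have "\<not> E d x" "\<not> E d a" "\<not> E d d"
    using simple_graph_sym[OF sg] simple_graph_irrefl[OF sg] by (metis in_nbhd_iff)+
  then have "nbhd E b \<inter> nbhd E d = {}" using nbb by auto
  then have "dirac_counterexample (V - {d}) (contract E b d)"
    by (rule dirac_counterexample_contract_disjoint[OF ce bd])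
  moreover have "V - {d} \<subset> V" using simple_graph_edgeD[OF sg bd] by blast
  ultimately show ?thesis by blast
qed

lemma dirac_counterexample_contract_path_end:
  assumes ce: "dirac_counterexample V E"
    and nx: "nbhd E x = {a, b, c}" and ab: "E a b" and bc: "\<not> E b c" "b \<noteq> c" and ac: "a \<noteq> c"
    and a4: "4 \<le> card (nbhd E a)"
  shows "dirac_counterexample (V - {b}) (contract E x b)"
proof -
  note sg = dirac_counterexampleD(1)[OF ce]
  have E: "E x a" "E x b" "E x c" using nx by auto
  have dist: "x \<noteq> a" "x \<noteq> b" "a \<noteq> b" using E ab simple_graph_irrefl[OF sg] by metis+
  have "{x, a} \<subseteq> nbhd E b" using E ab simple_graph_sym[OF sg] by auto
  then have "card {x, a} < card (nbhd E b)"
    using dirac_counterexampleD(2)[OF ce simple_graph_edgeD(2)[OF sg E(2)]] dist(1) by simp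
  then obtain d where d: "E b d" "d \<noteq> x" "d \<noteq> a"
    by (metis card_mono finite.emptyI finite.insertI in_nbhd_iff insertCI not_le subsetI)
  show ?thesis
  proof (rule dirac_counterexample_contract[OF ce E(2)])
    fix z assume "E x z" "E b z"
    then have "z = a" using nx bc simple_graph_irrefl[OF sg] by auto
    then show "4 \<le> card (nbhd E z)" using a4 by simp
  next
    have "d \<noteq> c" using d(1) bc by blast
    then have "card {a, c, d} = 3" using ac d by simp
    moreover have "{a, c, d} \<subseteq> (nbhd E x \<union> nbhd E b) - {x, b}"
      using nx d dist bc(2) ac simple_graph_irrefl[OF sg] by auto
    ultimately show "3 \<le> card ((nbhd E x \<union> nbhd E b) - {x, b})"
      using card_mono[OF finite_Diff[OF finite_UnI[OF finite_nbhd[OF sg] finite_nbhd[OF sg]]]]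
      by metis
  qed
qed

lemma dirac_counterexample_descent_path:
  assumes ce: "dirac_counterexample V E"
    and nx: "nbhd E x = {a, b, c}" and ab: "E a b" and ac: "E a c" and bc: "\<not> E b c" "b \<noteq> c"
  shows "\<exists>V' E'. V' \<subset> V \<and> dirac_counterexample V' E'"
proof -
  note sg = dirac_counterexampleD(1)[OF ce]
  note deg = dirac_counterexampleD(2)[OF ce]
  have E: "E x a" "E x b" "E x c" using nx by auto
  have V: "x \<in> V" "a \<in> V" "b \<in> V" "c \<in> V" using E simple_graph_edgeD[OF sg] by blast+
  have dist: "x \<noteq> b" "x \<noteq> c" "a \<noteq> c" using E ac simple_graph_irrefl[OF sg] by metis+
  show ?thesis
  proof (cases "card (nbhd E a) = 3")
    case False
    then have "4 \<le> card (nbhd E a)" using deg V(2) by force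
    then have "dirac_counterexample (V - {b}) (contract E x b)"
      by (rule dirac_counterexample_contract_path_end[OF ce nx ab bc dist(3)])
    then show ?thesis using V(3) by blast
  next
    case True
    have "{x, b, c} \<subseteq> nbhd E a" using E ab ac simple_graph_sym[OF sg] by auto
    moreover have "card {x, b, c} = 3" using dist bc(2) by simp
    ultimately have na: "nbhd E a = {x, b, c}"
      using True finite_nbhd[OF sg] by (metis card_subset_eq)
    consider "4 \<le> card (nbhd E b)" "4 \<le> card (nbhd E c)" | "card (nbhd E b) = 3"
      | "card (nbhd E c) = 3"
      using deg V by force
    then show ?thesis
    proof cases
      case 1
      then have "dirac_counterexample (V - {x} - {a}) (del_vertex (contract E b x) a)"
        by (rule dirac_counterexample_contract_delete[OF ce nx na bc])
      moreover have "V - {x} - {a} \<subset> V" using V by blast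
      ultimately show ?thesis by blast
    next
      case 2
      then show ?thesis by (rule dirac_counterexample_descent_degree_3_end[OF ce nx na bc(1)])
    next
      case 3
      have "nbhd E x = {a, c, b}" "nbhd E a = {x, c, b}" using nx na by (simp_all add: insert_commute)
      moreover have "\<not> E c b" using bc(1) simple_graph_sym[OF sg] by blast
      ultimately show ?thesis by (rule dirac_counterexample_descent_degree_3_end[OF ce _ _ _ 3])
    qed
  qed
qed

lemma dirac_counterexample_descent_min_degree_4:
  assumes ce: "dirac_counterexample V E" and deg4: "\<forall>v\<in>V. 4 \<le> card (nbhd E v)"
  shows "\<exists>V' E'. V' \<subset> V \<and> dirac_counterexample V' E'"
proof -
  note sg = dirac_counterexampleD(1)[OF ce]
  obtain v where v: "v \<in> V" using ce unfolding dirac_counterexample_def by blast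
  then have "nbhd E v \<noteq> {}" using deg4 by fastforce
  then obtain y where vy: "E v y" by auto
  have "dirac_counterexample (V - {y}) (contract E v y)"
  proof (rule dirac_counterexample_contract[OF ce vy])
    show "\<And>z. E v z \<Longrightarrow> E y z \<Longrightarrow> 4 \<le> card (nbhd E z)"
      using deg4 simple_graph_edgeD[OF sg] by blast
    have "nbhd E v - {y} \<subseteq> (nbhd E v \<union> nbhd E y) - {v, y}"
      using simple_graph_irrefl[OF sg] by auto
    then have "card (nbhd E v - {y}) \<le> card ((nbhd E v \<union> nbhd E y) - {v, y})"
      by (intro card_mono) (simp add: finite_nbhd[OF sg])
    moreover have "card (nbhd E v - {y}) = card (nbhd E v) - 1"
      using vy finite_nbhd[OF sg] by simp
    ultimately show "3 \<le> card ((nbhd E v \<union> nbhd E y) - {v, y})" using deg4 v by force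
  qed
  then show ?thesis using simple_graph_edgeD[OF sg vy] by blast
qed

text \<open>Either x and some neighbour u share no neighbour, so that xu can be contracted, or
  the neighbourhood of x contains a path or a triangle.\<close>
lemma dirac_counterexample_descent_degree_3:
  assumes ce: "dirac_counterexample V E" and x: "card (nbhd E x) = 3"
  shows "\<exists>V' E'. V' \<subset> V \<and> dirac_counterexample V' E'"
proof -
  note sg = dirac_counterexampleD(1)[OF ce]
  obtain a b c where nx: "nbhd E x = {a, b, c}" and abc: "a \<noteq> b" "b \<noteq> c" "a \<noteq> c"
    using x by (auto simp: card_3_iff)
  show ?thesis
  proof (cases "\<exists>u\<in>{a, b, c}. nbhd E x \<inter> nbhd E u = {}")
    case True
    then obtain u where "u \<in> nbhd E x" and disj: "nbhd E x \<inter> nbhd E u = {}" using nx by auto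
    then have u: "E x u" by simp
    then have "dirac_counterexample (V - {u}) (contract E x u)"
      using disj by (rule dirac_counterexample_contract_disjoint[OF ce])
    then show ?thesis using simple_graph_edgeD[OF sg u] by blast
  next
    case False
    then have "E a b \<or> E a c" "E b a \<or> E b c" "E c a \<or> E c b"
      using nx simple_graph_irrefl[OF sg] by auto
    then consider "E a b" "E a c" "E b c" | "E a b" "E a c" "\<not> E b c"
      | "E b a" "E b c" "\<not> E a c" | "E c a" "E c b" "\<not> E a b"
      using simple_graph_sym[OF sg] by blast
    then show ?thesis
    proof cases
      case 1
      have "E x a" "E x b" "E x c" using nx by auto
      then have "has_K4_minor V E" using 1 by (rule has_K4_minor_K4_subgraph[OF sg])
      then show ?thesis using dirac_counterexampleD(3)[OF ce] by blast
    next
      case 2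
      then show ?thesis by (rule dirac_counterexample_descent_path[OF ce nx _ _ _ abc(2)])
    next
      case 3
      have "nbhd E x = {b, a, c}" using nx by (simp add: insert_commute)
      from this 3 show ?thesis by (rule dirac_counterexample_descent_path[OF ce _ _ _ _ abc(3)])
    next
      case 4
      have "nbhd E x = {c, a, b}" using nx by (simp add: insert_commute)
      from this 4 show ?thesis by (rule dirac_counterexample_descent_path[OF ce _ _ _ _ abc(1)])
    qed
  qed
qed

lemma dirac_counterexample_descent:
  assumes ce: "dirac_counterexample V E"
  shows "\<exists>V' E'. V' \<subset> V \<and> dirac_counterexample V' E'"
proof (cases "\<forall>v\<in>V. 4 \<le> card (nbhd E v)")
  case True
  then show ?thesis by (rule dirac_counterexample_descent_min_degree_4[OF ce])
next
  case False
  then obtain x where "x \<in> V" "card (nbhd E x) = 3" using dirac_counterexampleD(2)[OF ce] by force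
  then show ?thesis using dirac_counterexample_descent_degree_3[OF ce] by blast
qed

theorem has_K4_minor_if_min_degree_3:
  assumes "simple_graph V E" "V \<noteq> {}" "\<forall>v\<in>V. 3 \<le> card (nbhd E v)"
  shows "has_K4_minor V E"
proof -
  have "\<not> dirac_counterexample V E" if "finite V" for V :: "'a set" and E
    using that
  proof (induction V arbitrary: E rule: finite_psubset_induct)
    case (psubset V)
    show ?case
    proof
      assume "dirac_counterexample V E"
      then obtain V' E' where "V' \<subset> V" "dirac_counterexample V' E'"
        by (metis dirac_counterexample_descent)
      then show False using psubset.IH by simp
    qed
  qed
  moreover have "finite V" using assms(1) by (rule simple_graph_finite)
  ultimately show ?thesis using assms unfolding dirac_counterexample_def by blast
qed

lemma exists_low_degree_vertex:
  assumes "simple_graph V E" "\<not> has_K4_minor V E" "V \<noteq> {}"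
  shows "\<exists>v\<in>V. card (nbhd E v) \<le> 2"
proof (rule ccontr)
  assume "\<not> (\<exists>v\<in>V. card (nbhd E v) \<le> 2)"
  then have "\<forall>v\<in>V. 3 \<le> card (nbhd E v)" by auto
  then show False using has_K4_minor_if_min_degree_3[OF assms(1,3)] assms(2) by blast
qed

lemma maximal_K4_minor_freeD:
  assumes "maximal_K4_minor_free V E"
  shows "\<not> has_K4_minor V E"
    and "x \<in> V \<Longrightarrow> y \<in> V \<Longrightarrow> x \<noteq> y \<Longrightarrow> \<not> E x y \<Longrightarrow> has_K4_minor V (add_edge E x y)"
  using assms unfolding maximal_K4_minor_free_def by blast+

lemma maximal_K4_minor_free_nbhd_nonempty:
  assumes sg: "simple_graph V E" and mx: "maximal_K4_minor_free V E"
    and V2: "2 \<le> card V" and vV: "v \<in> V"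
  shows "nbhd E v \<noteq> {}"
proof
  assume "nbhd E v = {}"
  then have nv: "\<not> E v u" for u by (metis empty_iff in_nbhd_iff)
  have "\<not> V \<subseteq> {v}" using card_mono[of "{v}" V] V2 by auto
  then obtain w where w: "w \<in> V" "v \<noteq> w" using vV by blast
  let ?H = "add_edge E v w"
  have "has_K4_minor V ?H" using maximal_K4_minor_freeD(2)[OF mx vV w nv] .
  then have "has_K4_minor (V - {v}) (del_vertex ?H v)"
    by (rule has_K4_minor_del_low_vertex[where p = w and q = w,
          OF simple_graph_add_edge[OF sg vV w]]) (use nv in \<open>auto simp: add_edge_def\<close>)
  then have "has_K4_minor V E" by (rule has_K4_minor_mono) (auto simp: del_vertex_def add_edge_def)
  then show False using maximal_K4_minor_freeD(1)[OF mx] by blast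
qed

text \<open>If the neighbour a of v has a further neighbour w, adding vw makes v simplicial;
  otherwise adding aw for a third vertex w makes a pendant once v is deleted.\<close>
lemma maximal_K4_minor_free_nbhd_not_singleton:
  assumes sg: "simple_graph V E" and mx: "maximal_K4_minor_free V E"
    and V3: "3 \<le> card V" and vV: "v \<in> V"
  shows "nbhd E v \<noteq> {a}"
proof
  assume "nbhd E v = {a}"
  then have nv: "E v u \<longleftrightarrow> u = a" for u unfolding set_eq_iff by simp
  then have va: "E v a" "a \<noteq> v" "a \<in> V"
    using simple_graph_irrefl[OF sg] simple_graph_edgeD(2)[OF sg] by metis+
  note add = maximal_K4_minor_freeD(2)[OF mx]
  have "has_K4_minor V E"
  proof (cases "\<exists>w. E a w \<and> w \<noteq> v")
    case True
    then obtain w where w: "E a w" "v \<noteq> w" by blast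
    have "w \<noteq> a" using w(1) simple_graph_irrefl[OF sg] by blast
    have "w \<in> V" using simple_graph_edgeD(2)[OF sg w(1)] .
    have "\<not> E v w" using nv \<open>w \<noteq> a\<close> by blast
    let ?H = "add_edge E v w"
    have "has_K4_minor V ?H" using add[OF vV \<open>w \<in> V\<close> w(2) \<open>\<not> E v w\<close>] .
    then have "has_K4_minor (V - {v}) (del_vertex ?H v)"
      by (rule has_K4_minor_del_low_vertex[where p = a and q = w,
            OF simple_graph_add_edge[OF sg vV \<open>w \<in> V\<close> w(2)]])
        (use nv w in \<open>auto simp: add_edge_def\<close>)
    then show ?thesis by (rule has_K4_minor_mono) (auto simp: del_vertex_def add_edge_def)
  next
    case False
    have "card {v, a} \<le> 2" by (cases "v = a") simp_all
    then have "\<not> V \<subseteq> {v, a}" using card_mono[of "{v, a}" V] V3 by auto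
    then obtain w where w: "w \<in> V" "w \<noteq> v" "a \<noteq> w" by blast
    let ?H = "add_edge E a w"
    let ?H' = "del_vertex ?H v"
    have sgH: "simple_graph V ?H" using simple_graph_add_edge[OF sg va(3) w(1,3)] .
    have "\<not> E a w" using False w(2) by blast
    then have "has_K4_minor V ?H" using add[OF va(3) w(1,3)] by blast
    then have "has_K4_minor (V - {v}) ?H'"
      by (rule has_K4_minor_del_low_vertex[where p = a and q = a, OF sgH])
        (use nv w va(2) in \<open>auto simp: add_edge_def\<close>)
    then have "has_K4_minor (V - {v} - {a}) (del_vertex ?H' a)"
      by (rule has_K4_minor_del_low_vertex[where p = w and q = w, OF simple_graph_del_vertex[OF sgH]])
        (use False w in \<open>auto simp: add_edge_def del_vertex_def\<close>)
    then show ?thesis by (rule has_K4_minor_mono) (auto simp: del_vertex_def add_edge_def)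
  qed
  then show False using maximal_K4_minor_freeD(1)[OF mx] by blast
qed

text \<open>Adding ab makes v simplicial, and deleting v from a K4 minor of the enlarged graph
  leaves a K4 minor of the graph obtained by contracting va.\<close>
lemma maximal_K4_minor_free_nbhd_adjacent:
  assumes sg: "simple_graph V E" and mx: "maximal_K4_minor_free V E"
    and nv: "nbhd E v = {a, b}" and ab: "a \<noteq> b"
  shows "E a b"
proof (rule ccontr)
  assume nab: "\<not> E a b"
  have nv': "E v u \<longleftrightarrow> u = a \<or> u = b" for u using nv unfolding set_eq_iff by simp
  then have va: "E v a" "E v b" "a \<in> V" "b \<in> V" using simple_graph_edgeD(2)[OF sg] by blast+
  let ?H = "add_edge E a b"
  have "has_K4_minor V ?H" using maximal_K4_minor_freeD(2)[OF mx va(3,4) ab nab] .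
  then have "has_K4_minor (V - {v}) (del_vertex ?H v)"
    by (rule has_K4_minor_del_low_vertex[where p = a and q = b,
          OF simple_graph_add_edge[OF sg va(3,4) ab]]) (use nv' in \<open>auto simp: add_edge_def\<close>)
  then have "has_K4_minor (V - {v}) (contract E a v)"
    by (rule has_K4_minor_mono) (use va ab in \<open>auto simp: del_vertex_def add_edge_def contract_def\<close>)
  then have "has_K4_minor V E" by (rule has_K4_minor_of_contract[OF sg simple_graph_sym[OF sg va(1)]])
  then show False using maximal_K4_minor_freeD(1)[OF mx] by blast
qed

lemma maximal_K4_minor_free_low_degree:
  assumes sg: "simple_graph V E" and mx: "maximal_K4_minor_free V E" and V3: "3 \<le> card V"
    and vV: "v \<in> V" and dv: "card (nbhd E v) \<le> 2"
  shows "\<exists>a b. nbhd E v = {a, b} \<and> a \<noteq> b \<and> E a b"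
proof -
  have "card (nbhd E v) \<noteq> 0"
    using maximal_K4_minor_free_nbhd_nonempty[OF sg mx _ vV] V3 finite_nbhd[OF sg] by simp
  moreover have "card (nbhd E v) \<noteq> Suc 0"
    using maximal_K4_minor_free_nbhd_not_singleton[OF sg mx V3 vV] by (auto simp: card_1_singleton_iff)
  ultimately have "card (nbhd E v) = 2" using dv by linarith
  then obtain a b where "nbhd E v = {a, b}" "a \<noteq> b" by (auto simp: card_2_iff)
  then show ?thesis using maximal_K4_minor_free_nbhd_adjacent[OF sg mx] by blast
qed

lemma maximal_K4_minor_free_del_vertex:
  assumes sg: "simple_graph V E" and mx: "maximal_K4_minor_free V E"
    and nv: "nbhd E v = {a, b}" and ab: "E a b"
  shows "maximal_K4_minor_free (V - {v}) (del_vertex E v)"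
  unfolding maximal_K4_minor_free_def
proof (intro conjI ballI impI)
  show "\<not> has_K4_minor (V - {v}) (del_vertex E v)"
  proof
    assume "has_K4_minor (V - {v}) (del_vertex E v)"
    then have "has_K4_minor V E" by (rule has_K4_minor_mono) (auto simp: del_vertex_def)
    then show False using maximal_K4_minor_freeD(1)[OF mx] by blast
  qed
next
  fix x y assume x: "x \<in> V - {v}" and y: "y \<in> V - {v}" and xy: "x \<noteq> y \<and> \<not> del_vertex E v x y"
  have nv': "E v u \<Longrightarrow> u = a \<or> u = b" for u using nv unfolding set_eq_iff by simp
  let ?H = "add_edge E x y"
  have "\<not> E x y" using x y xy by (auto simp: del_vertex_def)
  then have K: "has_K4_minor V ?H" using maximal_K4_minor_freeD(2)[OF mx] x y xy by blast
  have sgH: "simple_graph V ?H" using simple_graph_add_edge[OF sg] x y xy by blast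
  have "has_K4_minor (V - {v}) (del_vertex ?H v)"
    by (rule has_K4_minor_del_low_vertex[where p = a and q = b, OF sgH K])
      (use x y nv' ab in \<open>auto simp: add_edge_def\<close>)
  then show "has_K4_minor (V - {v}) (add_edge (del_vertex E v) x y)"
    by (rule has_K4_minor_mono) (auto simp: del_vertex_def add_edge_def)
qed

definition proper_3_colouring :: "'a set \<Rightarrow> ('a \<Rightarrow> 'a \<Rightarrow> bool) \<Rightarrow> ('a \<Rightarrow> nat) \<Rightarrow> bool" where
  "proper_3_colouring V E col \<longleftrightarrow>
     (\<forall>v\<in>V. col v < 3) \<and> (\<forall>u\<in>V. \<forall>w\<in>V. E u w \<longrightarrow> col u \<noteq> col w)"

definition in_triangle :: "('a \<Rightarrow> 'a \<Rightarrow> bool) \<Rightarrow> 'a \<Rightarrow> bool" where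
  "in_triangle E v \<longleftrightarrow> (\<exists>a b. E v a \<and> E v b \<and> E a b)"

lemma proper_3_colouring_extend:
  assumes col: "proper_3_colouring (V - {v}) (del_vertex E v) col"
    and nv: "\<And>u. E v u \<Longrightarrow> u = a \<or> u = b" and sg: "simple_graph V E"
  shows "\<exists>k. proper_3_colouring V E (col(v := k))"
proof -
  define k where "k = (if col a \<noteq> 0 \<and> col b \<noteq> 0 then 0
    else if col a \<noteq> 1 \<and> col b \<noteq> 1 then 1 else (2::nat))"
  have k: "k < 3" "k \<noteq> col a" "k \<noteq> col b" unfolding k_def by auto
  have "proper_3_colouring V E (col(v := k))"
    unfolding proper_3_colouring_def
  proof (intro conjI ballI impI)
    fix u assume "u \<in> V"
    then show "(col(v := k)) u < 3" using col k(1) by (auto simp: proper_3_colouring_def)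
  next
    fix u w assume uw: "u \<in> V" "w \<in> V" "E u w"
    have wu: "E w u" using simple_graph_sym[OF sg uw(3)] .
    consider "u = v" | "w = v" | "u \<noteq> v" "w \<noteq> v" by blast
    then show "(col(v := k)) u \<noteq> (col(v := k)) w"
    proof cases
      case 1
      then have "w \<noteq> v" "w = a \<or> w = b" using uw(3) nv simple_graph_irrefl[OF sg] by blast+
      then show ?thesis using 1 k by auto
    next
      case 2
      then have "u \<noteq> v" "u = a \<or> u = b" using wu nv simple_graph_irrefl[OF sg] by blast+
      then show ?thesis using 2 k by auto
    next
      case 3
      then show ?thesis using col uw by (auto simp: proper_3_colouring_def del_vertex_def)
    qed
  qed
  then show ?thesis by blast
qed

lemma maximal_K4_minor_free_card_3_complete:
  assumes sg: "simple_graph V E" and mx: "maximal_K4_minor_free V E" and V3: "card V = 3"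
    and xy: "x \<in> V" "y \<in> V" "x \<noteq> y"
  shows "E x y"
proof (rule ccontr)
  assume "\<not> E x y"
  then have "has_K4_minor V (add_edge E x y)" using maximal_K4_minor_freeD(2)[OF mx xy] by blast
  then have "4 \<le> card V" using has_K4_minor_card_ge_4 simple_graph_finite[OF sg] by blast
  then show False using V3 by simp
qed

lemma triangle_colouring_extend:
  assumes sg: "simple_graph V E"
    and col: "proper_3_colouring (V - {v}) (del_vertex E v) col"
    and tri: "\<forall>u\<in>V - {v}. in_triangle (del_vertex E v) u"
    and nv: "nbhd E v = {a, b}" and ab: "E a b"
  shows "\<exists>col. proper_3_colouring V E col \<and> (\<forall>u\<in>V. in_triangle E u)"
proof -
  have nv': "E v u \<Longrightarrow> u = a \<or> u = b" for u using nv unfolding set_eq_iff by simp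
  obtain k where "proper_3_colouring V E (col(v := k))"
    using proper_3_colouring_extend[OF col nv' sg] by blast
  moreover have "in_triangle E u" if "u \<in> V" for u
  proof (cases "u = v")
    case True
    have "E v a" "E v b" using nv by auto
    then show ?thesis using True ab unfolding in_triangle_def by blast
  next
    case False
    then show ?thesis using tri that unfolding in_triangle_def del_vertex_def by blast
  qed
  ultimately show ?thesis by blast
qed

lemma complete_graph_3_triangle_colouring:
  assumes sg: "simple_graph V E" and V3: "card V = 3"
    and complete: "\<And>x y. x \<in> V \<Longrightarrow> y \<in> V \<Longrightarrow> x \<noteq> y \<Longrightarrow> E x y"
  shows "\<exists>col. proper_3_colouring V E col \<and> (\<forall>v\<in>V. in_triangle E v)"
proof -
  obtain p q r where V: "V = {p, q, r}" and d: "p \<noteq> q" "q \<noteq> r" "p \<noteq> r"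
    using V3 by (auto simp: card_3_iff)
  have "E p q" "E p r" "E q r" "E q p" "E r p" "E r q" using complete V d by auto
  then have "in_triangle E v" if "v \<in> V" for v
    using that V unfolding in_triangle_def by blast
  moreover define col where "col z = (if z = p then 0 else if z = q then 1 else (2::nat))" for z
  have "proper_3_colouring V E col"
    unfolding proper_3_colouring_def col_def using V d simple_graph_irrefl[OF sg] by auto
  ultimately show ?thesis by blast
qed

lemma maximal_K4_minor_free_triangle_colouring:
  assumes "simple_graph V E" "maximal_K4_minor_free V E" "3 \<le> card V"
  shows "\<exists>col. proper_3_colouring V E col \<and> (\<forall>v\<in>V. in_triangle E v)"
proof -
  have "finite V" using assms(1) by (rule simple_graph_finite)
  then show ?thesis using assms
  proof (induction V arbitrary: E rule: finite_psubset_induct)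
    case (psubset V)
    note sg = psubset.prems(1) and mx = psubset.prems(2)
    show ?case
    proof (cases "card V = 3")
      case True
      have "E x y" if "x \<in> V" "y \<in> V" "x \<noteq> y" for x y
        using maximal_K4_minor_free_card_3_complete[OF sg mx True that] .
      then show ?thesis using complete_graph_3_triangle_colouring[OF sg True] by blast
    next
      case False
      then have "V \<noteq> {}" "3 < card V" using psubset.prems(3) by auto
      then obtain v where v: "v \<in> V" "card (nbhd E v) \<le> 2"
        using exists_low_degree_vertex[OF sg maximal_K4_minor_freeD(1)[OF mx]] by blast
      then obtain a b where nv: "nbhd E v = {a, b}" "E a b"
        using maximal_K4_minor_free_low_degree[OF sg mx psubset.prems(3)] by blast
      have "V - {v} \<subset> V" "3 \<le> card (V - {v})" using v \<open>3 < card V\<close> psubset.hyps by auto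
      then obtain col where "proper_3_colouring (V - {v}) (del_vertex E v) col"
        and "\<forall>u\<in>V - {v}. in_triangle (del_vertex E v) u"
        using psubset.IH simple_graph_del_vertex[OF sg] maximal_K4_minor_free_del_vertex[OF sg mx nv]
        by blast
      then show ?thesis using triangle_colouring_extend[OF sg _ _ nv] by blast
    qed
  qed
qed

lemma double_domination_number_le:
  assumes "finite V" "double_dominating V E S"
  shows "double_domination_number V E \<le> card S"
proof -
  have "{card S | S. double_dominating V E S} \<subseteq> {..card V}"
    using assms(1) by (auto simp: double_dominating_def card_mono)
  then have "finite {card S | S. double_dominating V E S}" by (rule finite_subset) simp
  then show ?thesis unfolding double_domination_number_def using assms(2) by (intro Min_le) auto
qed

lemma double_dominating_colour_class_complement:
  assumes sg: "simple_graph V E" and col: "proper_3_colouring V E col"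
    and tri: "\<forall>v\<in>V. in_triangle E v"
  shows "double_dominating V E {v\<in>V. col v \<noteq> k}"
  unfolding double_dominating_def
proof (intro conjI ballI)
  let ?S = "{v\<in>V. col v \<noteq> k}"
  show "?S \<subseteq> V" by blast
  fix v assume v: "v \<in> V"
  obtain a b where e: "E v a" "E v b" "E a b" using tri v unfolding in_triangle_def by blast
  have V: "a \<in> V" "b \<in> V" using e simple_graph_edgeD(2)[OF sg] by blast+
  have c: "col v \<noteq> col a" "col v \<noteq> col b" "col a \<noteq> col b"
    using col e v V unfolding proper_3_colouring_def by blast+
  have N: "v \<in> closed_nbhd E v" "a \<in> closed_nbhd E v" "b \<in> closed_nbhd E v"
    using e by (auto simp: closed_nbhd_def)
  have fin: "finite (?S \<inter> closed_nbhd E v)" using simple_graph_finite[OF sg] by simp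
  have two: "2 \<le> card (?S \<inter> closed_nbhd E v)"
    if "p \<in> ?S \<inter> closed_nbhd E v" "q \<in> ?S \<inter> closed_nbhd E v" "col p \<noteq> col q" for p q
  proof -
    have "card {p, q} \<le> card (?S \<inter> closed_nbhd E v)" using that by (intro card_mono[OF fin]) auto
    then show ?thesis using that(3) by (cases "p = q") auto
  qed
  consider "col v = k" | "col a = k" | "col v \<noteq> k" "col a \<noteq> k" by blast
  then show "2 \<le> card (?S \<inter> closed_nbhd E v)"
  proof cases
    case 1
    then show ?thesis using two[of a b] V N c by auto
  next
    case 2
    then show ?thesis using two[of v b] v V N c by auto
  next
    case 3
    then show ?thesis using two[of v a] v V N c by auto
  qed
qed

lemma exists_large_colour_class:
  assumes "finite V" "\<forall>v\<in>V. col v < (3::nat)"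
  shows "\<exists>k. card V \<le> 3 * card {v\<in>V. col v = k}"
proof (rule ccontr)
  let ?C = "\<lambda>k. {v\<in>V. col v = k}"
  assume "\<not> (\<exists>k. card V \<le> 3 * card (?C k))"
  then have small: "3 * card (?C k) < card V" for k by (simp add: not_le)
  have "card (\<Union>k<3. ?C k) = (\<Sum>k<3. card (?C k))"
    using assms(1) by (intro card_UN_disjoint) auto
  moreover have "(\<Union>k<3. ?C k) = V" using assms(2) by auto
  ultimately have "card V = (\<Sum>k<3. card (?C k))" by simp
  also have "\<dots> = card (?C 0) + card (?C 1) + card (?C 2)"
    by (simp add: numeral_3_eq_3 numeral_2_eq_2)
  finally show False using small[of 0] small[of 1] small[of 2] by linarith
qed

theorem theorem3p2:
  fixes V :: "'a set" and E :: "'a \<Rightarrow> 'a \<Rightarrow> bool"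
  assumes "simple_graph V E"
    and "maximal_K4_minor_free V E"
    and "card V \<ge> 3"
  shows "double_domination_number V E \<le> (2 * card V) div 3"
proof -
  have fin: "finite V" using assms(1) by (rule simple_graph_finite)
  obtain col where col: "proper_3_colouring V E col" and tri: "\<forall>v\<in>V. in_triangle E v"
    using maximal_K4_minor_free_triangle_colouring[OF assms] by blast
  then obtain k where k: "card V \<le> 3 * card {v\<in>V. col v = k}"
    using exists_large_colour_class[OF fin] unfolding proper_3_colouring_def by blast
  have "double_domination_number V E \<le> card {v\<in>V. col v \<noteq> k}"
    by (rule double_domination_number_le[OF fin double_dominating_colour_class_complement[OF assms(1) col tri]])
  also have "{v\<in>V. col v \<noteq> k} = V - {v\<in>V. col v = k}" by blast
  also have "card \<dots> = card V - card {v\<in>V. col v = k}"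
    using fin by (intro card_Diff_subset) auto
  also have "\<dots> \<le> (2 * card V) div 3" using k by linarith
  finally show ?thesis .
qed

end
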